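(* Consider the two-layer multi-item order fulfillment problem described in the context, with $K\ge 1$ FDCs, fixed costs $f_0\ge 0$ and $f_1,\dots,f_K>0$, and time-invariant variable costs $c_{k,t}^i\equiv c_k^i$. Let \textsc{Cost-Comparison V-Priority} be the Gated Priority-based Greedy policy that uses, for each item $i$, the ranking $k\prec_i j\iff c_k^i<c_j^i$ or ($c_k^i=c_j^i$ and $k<j$) on $\{0,\dots,K\}$, and the gating condition \[G=\mathbb{I}\left(\sum_{k=0}^K\Big[f_k\,\mathbb{I}\Big(\sum_{i=1}^n\hat m_{k,t}^i>0\Big)+\sum_{i=1}^n c_k^i\hat m_{k,t}^i\Big]>f_0+\sum_{i=1}^n c_0^iS_t^i\right).\] Then \[\mathfrak R_{\mathrm{inv}}(\textsc{Cost-Comparison V-Priority})\le\max\left\{\frac{f_0+\sum_{k\in[K]}f_k}{\min_{k\in[K]}f_k},\ 2\right\}.\]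
   Context: Problem. $n$ items, $K$ FDCs indexed $k\in[K]$, an RDC indexed $k=0$ with unlimited inventory. FDC $k$ initially holds $I_{k,0}^i\ge 0$ units of item $i$, never replenished. In periods $t=1,\dots,T$ an order $\boldsymbol S_t=(S_t^i)_i$ of nonnegative integers arrives; the policy must immediately and irrevocably choose $m_{k,t}^i\ge 0$ with $\sum_{k=0}^K m_{k,t}^i=S_t^i$ and $m_{k,t}^i\le I_{k,t-1}^i$ for $k\in[K]$, where $I_{k,t}^i=I_{k,0}^i-\sum_{\tau\le t}m_{k,\tau}^i$. Period cost $\sum_{k=0}^K[f_k\mathbb{I}(\sum_i m_{k,t}^i>0)+\sum_i c_{k,t}^im_{k,t}^i]$; total cost is the sum. An online policy (possibly randomized) decides in period $t$ using only fixed costs, initial inventories and orders/variable costs up to $t$. $\mathrm{ALG}(I)$ is the (expected) total cost on instance $I$, $\mathrm{OPT}(I)$ the offline optimal total cost. The time-invariant competitive ratio $\mathfrak R_{\mathrm{inv}}(\mathrm{ALG})$ is the supremum of $\mathrm{ALG}(I)/\mathrm{OPT}(I)$ over all $n,T$, initial inventories, nonnegative time-invariant variable costs $c_{k,t}^i=c_k^i$ (for all $t$), and order sequences. Gated Priority-based Greedy policy: with rankings $\prec_i$ on $\{0,\dots,K\}$ and gating condition $G$, in each period $t$ compute $\hat m_{k,t}^i=\min\{(S_t^i-\sum_{k'\in[K]:k'\prec_ik}I_{k',t-1}^i)^+,\ I_{k,t-1}^i\}\cdot\mathbb{I}(k\prec_i0)$ for $k\in[K]$ and $\hat m_{0,t}^i=S_t^i-\sum_{k\in[K]}\hat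 m_{k,t}^i$; if $G=1$, send the whole order to the RDC ($m_{0,t}^i=S_t^i$, $m_{k,t}^i=0$ for $k\in[K]$), otherwise set $m_{k,t}^i=\hat m_{k,t}^i$; then update inventories. *)

theory Defs
  imports Complex_Main
begin

text \<open>Items are indexed by i < n, FDCs by k \<in> {1..K}, the RDC by k = 0,
periods by t \<in> {1..T}. Fixed costs f k, time-invariant variable costs c k i,
initial FDC inventories I0 k i, orders S t i. An allocation in period t is a
function m k i (units of item i sent from node k).\<close>

definition period_cost ::
  "nat \<Rightarrow> nat \<Rightarrow> (nat \<Rightarrow> real) \<Rightarrow> (nat \<Rightarrow> nat \<Rightarrow> real) \<Rightarrow> (nat \<Rightarrow> nat \<Rightarrow> nat) \<Rightarrow> real" where
  "period_cost n K f c m =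
     (\<Sum>k\<in>{0..K}. f k * (if (\<Sum>i<n. m k i) > 0 then 1 else 0)
                  + (\<Sum>i<n. c k i * real (m k i)))"

definition prec :: "(nat \<Rightarrow> nat \<Rightarrow> real) \<Rightarrow> nat \<Rightarrow> nat \<Rightarrow> nat \<Rightarrow> bool" where
  "prec c i k j \<longleftrightarrow> c k i < c j i \<or> (c k i = c j i \<and> k < j)"

text \<open>Tentative (priority-based greedy) allocation \<open>\<hat>m\<close> given current inventory
st and current order s.\<close>
definition mhat ::
  "nat \<Rightarrow> (nat \<Rightarrow> nat \<Rightarrow> real) \<Rightarrow> (nat \<Rightarrow> nat \<Rightarrow> nat) \<Rightarrow> (nat \<Rightarrow> nat) \<Rightarrow> nat \<Rightarrow> nat \<Rightarrow> nat" where
  "mhat K c st s k i =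
     (if k = 0 then
        s i - (\<Sum>k'\<in>{1..K}.
                 (if prec c i k' 0
                  then min (s i - (\<Sum>k''\<in>{k''\<in>{1..K}. prec c i k'' k'}. st k'' i)) (st k' i)
                  else 0))
      else if prec c i k 0
        then min (s i - (\<Sum>k''\<in>{k''\<in>{1..K}. prec c i k'' k}. st k'' i)) (st k i)
        else 0)"

definition ccvp_decision ::
  "nat \<Rightarrow> nat \<Rightarrow> (nat \<Rightarrow> real) \<Rightarrow> (nat \<Rightarrow> nat \<Rightarrow> real) \<Rightarrow> (nat \<Rightarrow> nat \<Rightarrow> nat) \<Rightarrow> (nat \<Rightarrow> nat)
     \<Rightarrow> nat \<Rightarrow> nat \<Rightarrow> nat" where
  "ccvp_decision n K f c st s =
     (if period_cost n K f c (mhat K c st s) > f 0 + (\<Sum>i<n. c 0 i * real (s i))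
      then (\<lambda>k i. if k = 0 then s i else 0)
      else mhat K c st s)"

text \<open>Inventory after period t under the policy (inventory after period 0 is I0).\<close>
fun ccvp_inv ::
  "nat \<Rightarrow> nat \<Rightarrow> (nat \<Rightarrow> real) \<Rightarrow> (nat \<Rightarrow> nat \<Rightarrow> real) \<Rightarrow> (nat \<Rightarrow> nat \<Rightarrow> nat) \<Rightarrow> (nat \<Rightarrow> nat \<Rightarrow> nat)
     \<Rightarrow> nat \<Rightarrow> nat \<Rightarrow> nat \<Rightarrow> nat" where
  "ccvp_inv n K f c I0 S 0 = I0"
| "ccvp_inv n K f c I0 S (Suc t) =
     (\<lambda>k i. ccvp_inv n K f c I0 S t k i
            - ccvp_decision n K f c (ccvp_inv n K f c I0 S t) (S (Suc t)) k i)"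

definition ccvp_alloc ::
  "nat \<Rightarrow> nat \<Rightarrow> (nat \<Rightarrow> real) \<Rightarrow> (nat \<Rightarrow> nat \<Rightarrow> real) \<Rightarrow> (nat \<Rightarrow> nat \<Rightarrow> nat) \<Rightarrow> (nat \<Rightarrow> nat \<Rightarrow> nat)
     \<Rightarrow> nat \<Rightarrow> nat \<Rightarrow> nat \<Rightarrow> nat" where
  "ccvp_alloc n K f c I0 S t = ccvp_decision n K f c (ccvp_inv n K f c I0 S (t - 1)) (S t)"

definition ALG_ccvp ::
  "nat \<Rightarrow> nat \<Rightarrow> nat \<Rightarrow> (nat \<Rightarrow> real) \<Rightarrow> (nat \<Rightarrow> nat \<Rightarrow> real) \<Rightarrow> (nat \<Rightarrow> nat \<Rightarrow> nat)
     \<Rightarrow> (nat \<Rightarrow> nat \<Rightarrow> nat) \<Rightarrow> real" where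
  "ALG_ccvp n K T f c I0 S = (\<Sum>t\<in>{1..T}. period_cost n K f c (ccvp_alloc n K f c I0 S t))"

definition feasible_plan ::
  "nat \<Rightarrow> nat \<Rightarrow> nat \<Rightarrow> (nat \<Rightarrow> nat \<Rightarrow> nat) \<Rightarrow> (nat \<Rightarrow> nat \<Rightarrow> nat) \<Rightarrow> (nat \<Rightarrow> nat \<Rightarrow> nat \<Rightarrow> nat) \<Rightarrow> bool" where
  "feasible_plan n K T I0 S M \<longleftrightarrow>
     (\<forall>t\<in>{1..T}. \<forall>i<n.
        (\<Sum>k\<in>{0..K}. M t k i) = S t i \<and>
        (\<forall>k\<in>{1..K}. int (M t k i) \<le> int (I0 k i) - (\<Sum>\<tau>\<in>{1..<t}. int (M \<tau> k i))))"

definition OPT ::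
  "nat \<Rightarrow> nat \<Rightarrow> nat \<Rightarrow> (nat \<Rightarrow> real) \<Rightarrow> (nat \<Rightarrow> nat \<Rightarrow> real) \<Rightarrow> (nat \<Rightarrow> nat \<Rightarrow> nat)
     \<Rightarrow> (nat \<Rightarrow> nat \<Rightarrow> nat) \<Rightarrow> real" where
  "OPT n K T f c I0 S =
     Inf ((\<lambda>M. \<Sum>t\<in>{1..T}. period_cost n K f c (M t)) ` {M. feasible_plan n K T I0 S M})"

end

theory Submission
  imports Defs "HOL-Analysis.Analysis"
begin

(* In period t the policy pays the variable cost of the ungated greedy allocation mhat plus an
   excess. Since the gate compares with sending the whole order to the RDC, the excess is at most
   min (f 0 + ... + f K) (cost of the RDC-only allocation). A fulfilling allocation either uses an
   FDC, and then pays at least min f_k in fixed cost, or it is the RDC-only allocation; so the excess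
   is at most R * fixed + (R - 1) * variable cost of any plan in that period, where
   R = max ((f 0 + ... + f K) / min f_k) 2.
   The variable cost of mhat, summed over all periods, is at most that of any feasible plan: for a
   threshold \<theta> < c 0 i, the FDCs of cost at most \<theta> form a prefix of the ranking, and greedy
   spends their pooled stock first and only on actual demand, so it ships at least as many units from
   nodes of cost at most \<theta> as the plan. The layer-cake formula turns these threshold comparisons
   into a comparison of variable costs. *)

lemma prec_irrefl: "\<not> prec c i k k"
  by (auto simp: prec_def)

lemma prec_trans: "prec c i a b \<Longrightarrow> prec c i b d \<Longrightarrow> prec c i a d"
  by (auto simp: prec_def)

lemma prec_asym: "prec c i a b \<Longrightarrow> \<not> prec c i b a"
  by (auto simp: prec_def)

lemma prec_total: "a \<noteq> b \<Longrightarrow> prec c i a b \<or> prec c i b a"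
  by (auto simp: prec_def)

lemma prec_greatest_exists:
  assumes "finite C" "C \<noteq> {}"
  shows "\<exists>m\<in>C. \<forall>k\<in>C. k \<noteq> m \<longrightarrow> prec c i k m"
  using assms
proof (induction rule: finite_ne_induct)
  case (insert x F)
  then obtain m where "m \<in> F" and below_m: "\<forall>k\<in>F. k \<noteq> m \<longrightarrow> prec c i k m" by blast
  show ?case
  proof (cases "prec c i m x")
    case True
    have "prec c i k x" if "k \<in> F" for k
    proof (cases "k = m")
      case False
      then show ?thesis using that below_m prec_trans[OF _ True] by blast
    qed (use True in simp)
    then show ?thesis by blast
  next
    case False
    then have "prec c i x m" using \<open>m \<in> F\<close> \<open>x \<notin> F\<close> prec_total by metis
    then show ?thesis using below_m \<open>m \<in> F\<close> by blast
  qed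
qed simp

lemma mhat_fdc:
  "k \<noteq> 0 \<Longrightarrow> mhat K c st s k i = (if prec c i k 0
     then min (s i - (\<Sum>k'\<in>{k'\<in>{1..K}. prec c i k' k}. st k' i)) (st k i) else 0)"
  by (simp add: mhat_def)

lemma mhat_le_stock: "k \<noteq> 0 \<Longrightarrow> mhat K c st s k i \<le> st k i"
  by (simp add: mhat_fdc)

lemma mhat_le_order: "mhat K c st s k i \<le> s i"
  by (cases "k = 0") (auto simp: mhat_def)

lemma sum_mhat_prefix:
  assumes "C \<subseteq> {1..K}"
    and "\<And>k k'. k \<in> C \<Longrightarrow> k' \<in> {1..K} \<Longrightarrow> prec c i k' k \<Longrightarrow> k' \<in> C"
    and "\<And>k. k \<in> C \<Longrightarrow> prec c i k 0"
  shows "(\<Sum>k\<in>C. mhat K c st s k i) = min (s i) (\<Sum>k\<in>C. st k i)"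
  using assms
proof (induction "card C" arbitrary: C rule: less_induct)
  case less
  have fin: "finite C" using less.prems(1) finite_subset by blast
  show ?case
  proof (cases "C = {}")
    case False
    obtain m where m: "m \<in> C" and below_m: "\<And>k. k \<in> C \<Longrightarrow> k \<noteq> m \<Longrightarrow> prec c i k m"
      using prec_greatest_exists[OF fin False] by blast
    define C' where "C' = C - {m}"
    have "card C' < card C" unfolding C'_def using card_Diff1_less[OF fin m] .
    moreover have "C' \<subseteq> {1..K}" using less.prems(1) by (auto simp: C'_def)
    moreover have "k' \<in> C'" if "k \<in> C'" "k' \<in> {1..K}" "prec c i k' k" for k k'
      using that less.prems(2) below_m prec_asym unfolding C'_def by blast
    moreover have "prec c i k 0" if "k \<in> C'" for k using that less.prems(3) by (simp add: C'_def)
    ultimately have IH: "(\<Sum>k\<in>C'. mhat K c st s k i) = min (s i) (\<Sum>k\<in>C'. st k i)"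
      using less.hyps by blast
    have "{k\<in>{1..K}. prec c i k m} = C'"
      unfolding C'_def using less.prems(1,2) below_m m prec_irrefl by blast
    moreover have "m \<noteq> 0" using m less.prems(1) by auto
    ultimately have mhat_m: "mhat K c st s m i = min (s i - (\<Sum>k\<in>C'. st k i)) (st m i)"
      using less.prems(3) m by (simp add: mhat_fdc)
    have "(\<Sum>k\<in>C. mhat K c st s k i) = mhat K c st s m i + (\<Sum>k\<in>C'. mhat K c st s k i)"
      unfolding C'_def using fin m by (simp add: sum.remove)
    also have "\<dots> = min (s i) (st m i + (\<Sum>k\<in>C'. st k i))" using mhat_m IH by simp
    also have "\<dots> = min (s i) (\<Sum>k\<in>C. st k i)"
      unfolding C'_def using fin m by (simp add: sum.remove)
    finally show ?thesis .
  qed simp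
qed

lemma sum_mhat_fdc:
  "(\<Sum>k\<in>{1..K}. mhat K c st s k i) = min (s i) (\<Sum>k\<in>{k\<in>{1..K}. prec c i k 0}. st k i)"
proof -
  have "(\<Sum>k\<in>{1..K}. mhat K c st s k i) = (\<Sum>k\<in>{k\<in>{1..K}. prec c i k 0}. mhat K c st s k i)"
    by (rule sum.mono_neutral_right) (auto simp: mhat_fdc)
  also have "\<dots> = min (s i) (\<Sum>k\<in>{k\<in>{1..K}. prec c i k 0}. st k i)"
    by (rule sum_mhat_prefix) (auto intro: prec_trans)
  finally show ?thesis .
qed

lemma sum_atLeast0_atMost: "(\<Sum>k\<in>{0..K}. h k) = h 0 + (\<Sum>k\<in>{1..K}. h (k::nat))"
  by (simp add: sum.atLeast_Suc_atMost)

lemma mhat_rdc: "mhat K c st s 0 i = s i - (\<Sum>k\<in>{1..K}. mhat K c st s k i)"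
  by (simp add: mhat_def mhat_fdc)

lemma sum_mhat: "(\<Sum>k\<in>{0..K}. mhat K c st s k i) = s i"
  using sum_mhat_fdc[of K c st s i] by (simp add: sum_atLeast0_atMost mhat_rdc)

lemma sum_min_stock_ge:
  fixes s d :: "nat \<Rightarrow> nat"
  assumes depletion: "\<And>t. s t - d (Suc t) \<le> s (Suc t)"
  shows "min (\<Sum>t\<in>{1..T}. d t) (s 0) \<le> (\<Sum>t\<in>{1..T}. min (d t) (s (t - 1)))"
proof -
  have "min (\<Sum>t\<in>{1..T}. d t) (s 0) \<le> (\<Sum>t\<in>{1..T}. min (d t) (s (t - 1)))
      \<and> s 0 \<le> (\<Sum>t\<in>{1..T}. min (d t) (s (t - 1))) + s T"
  proof (induction T)
    case (Suc T)
    then show ?case using depletion[of T] by (auto simp: min_def split: if_splits)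
  qed simp
  then show ?thesis ..
qed

lemma sum_prefix_stock_depletion:
  fixes st :: "nat \<Rightarrow> nat \<Rightarrow> nat \<Rightarrow> nat" and gated :: "nat \<Rightarrow> bool" and S :: "nat \<Rightarrow> nat \<Rightarrow> nat"
  assumes stock_update: "\<And>k. k \<in> {1..K} \<Longrightarrow> st (Suc t) k i
      = st t k i - (if gated (Suc t) then 0 else mhat K c (st t) (S (Suc t)) k i)"
    and prefix: "C \<subseteq> {1..K}" "\<And>k k'. k \<in> C \<Longrightarrow> k' \<in> {1..K} \<Longrightarrow> prec c i k' k \<Longrightarrow> k' \<in> C"
      "\<And>k. k \<in> C \<Longrightarrow> prec c i k 0"
  shows "(\<Sum>k\<in>C. st t k i) - S (Suc t) i \<le> (\<Sum>k\<in>C. st (Suc t) k i)"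
proof -
  have fdc: "k \<in> {1..K}" if "k \<in> C" for k using that prefix(1) by blast
  show ?thesis
  proof (cases "gated (Suc t)")
    case True
    have "(\<Sum>k\<in>C. st (Suc t) k i) = (\<Sum>k\<in>C. st t k i)"
      by (rule sum.cong) (simp_all add: True stock_update[OF fdc])
    then show ?thesis by simp
  next
    case False
    have "(\<Sum>k\<in>C. st (Suc t) k i) = (\<Sum>k\<in>C. st t k i - mhat K c (st t) (S (Suc t)) k i)"
      by (rule sum.cong) (simp_all add: False stock_update[OF fdc])
    also have "\<dots> = (\<Sum>k\<in>C. st t k i) - (\<Sum>k\<in>C. mhat K c (st t) (S (Suc t)) k i)"
      by (rule sum_subtractf_nat, rule mhat_le_stock) (use fdc in fastforce)
    also have "\<dots> = (\<Sum>k\<in>C. st t k i) - min (S (Suc t) i) (\<Sum>k\<in>C. st t k i)"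
      using sum_mhat_prefix[OF prefix] by simp
    finally show ?thesis by linarith
  qed
qed

lemma sum_cheap_mhat_eq_order:
  assumes "c 0 i \<le> \<theta>"
  shows "(\<Sum>k\<in>{k\<in>{0..K}. c k i \<le> \<theta>}. mhat K c st s k i) = s i"
proof -
  have "mhat K c st s k i = 0" if "k \<in> {0..K} - {k. c k i \<le> \<theta>}" for k
  proof -
    have "k \<noteq> 0" "\<not> prec c i k 0"
      using that assms by (cases "k = 0"; auto simp: prec_def)+
    then show ?thesis by (simp add: mhat_fdc)
  qed
  then have "(\<Sum>k\<in>{k\<in>{0..K}. c k i \<le> \<theta>}. mhat K c st s k i) = (\<Sum>k\<in>{0..K}. mhat K c st s k i)"
    by (intro sum.mono_neutral_left) auto
  then show ?thesis by (simp add: sum_mhat)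
qed

lemma sum_cheap_mhat_ge:
  fixes st :: "nat \<Rightarrow> nat \<Rightarrow> nat \<Rightarrow> nat" and gated :: "nat \<Rightarrow> bool"
    and S :: "nat \<Rightarrow> nat \<Rightarrow> nat" and M :: "nat \<Rightarrow> nat \<Rightarrow> nat \<Rightarrow> nat"
  assumes stock_update: "\<And>t k. k \<in> {1..K} \<Longrightarrow> st (Suc t) k i
      = st t k i - (if gated (Suc t) then 0 else mhat K c (st t) (S (Suc t)) k i)"
    and M_serves: "\<And>t. t \<in> {1..T} \<Longrightarrow> (\<Sum>k\<in>{0..K}. M t k i) = S t i"
    and M_stock: "\<And>k. k \<in> {1..K} \<Longrightarrow> (\<Sum>t\<in>{1..T}. M t k i) \<le> st 0 k i"
  shows "(\<Sum>t\<in>{1..T}. \<Sum>k\<in>{k\<in>{0..K}. c k i \<le> \<theta>}. M t k i)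
       \<le> (\<Sum>t\<in>{1..T}. \<Sum>k\<in>{k\<in>{0..K}. c k i \<le> \<theta>}. mhat K c (st (t - 1)) (S t) k i)"
proof -
  have M_cheap: "(\<Sum>k\<in>{k\<in>{0..K}. c k i \<le> \<theta>}. M t k i) \<le> S t i" if "t \<in> {1..T}" for t
  proof -
    have "(\<Sum>k\<in>{k\<in>{0..K}. c k i \<le> \<theta>}. M t k i) \<le> (\<Sum>k\<in>{0..K}. M t k i)"
      by (rule sum_mono2) auto
    then show ?thesis using M_serves[OF that] by simp
  qed
  show ?thesis
  proof (cases "c 0 i \<le> \<theta>")
    case True
    show ?thesis unfolding sum_cheap_mhat_eq_order[of c i \<theta>, OF True] by (rule sum_mono) (rule M_cheap)
  next
    case False
    define C where "C = {k\<in>{1..K}. c k i \<le> \<theta>}"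
    have cheap_eq: "{k\<in>{0..K}. c k i \<le> \<theta>} = C"
      using False unfolding C_def by (auto intro: Suc_leI gr0I)
    define s where "s t = (\<Sum>k\<in>C. st t k i)" for t
    have served: "(\<Sum>k\<in>C. mhat K c (st t) (S u) k i) = min (S u i) (s t)" for t u
      unfolding s_def using False by (intro sum_mhat_prefix) (auto simp: C_def prec_def)
    have depletion: "s t - S (Suc t) i \<le> s (Suc t)" for t
      unfolding s_def
      by (rule sum_prefix_stock_depletion[where K = K and c = c and gated = gated])
        (use False in \<open>auto simp: stock_update C_def prec_def\<close>)
    have "(\<Sum>t\<in>{1..T}. \<Sum>k\<in>C. M t k i) \<le> s 0"
    proof -
      have "(\<Sum>t\<in>{1..T}. \<Sum>k\<in>C. M t k i) = (\<Sum>k\<in>C. \<Sum>t\<in>{1..T}. M t k i)"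
        by (rule sum.swap)
      also have "\<dots> \<le> s 0" unfolding s_def by (rule sum_mono, rule M_stock) (simp add: C_def)
      finally show ?thesis .
    qed
    moreover have "(\<Sum>t\<in>{1..T}. \<Sum>k\<in>C. M t k i) \<le> (\<Sum>t\<in>{1..T}. S t i)"
      using M_cheap unfolding cheap_eq by (rule sum_mono)
    ultimately have "(\<Sum>t\<in>{1..T}. \<Sum>k\<in>C. M t k i) \<le> min (\<Sum>t\<in>{1..T}. S t i) (s 0)"
      by simp
    also have "\<dots> \<le> (\<Sum>t\<in>{1..T}. min (S t i) (s (t - 1)))"
      using depletion by (rule sum_min_stock_ge)
    also have "\<dots> = (\<Sum>t\<in>{1..T}. \<Sum>k\<in>C. mhat K c (st (t - 1)) (S t) k i)"
      by (simp add: served)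
    finally show ?thesis unfolding cheap_eq .
  qed
qed

lemma has_integral_step:
  fixes x B :: real
  assumes "0 \<le> x" "x \<le> B"
  shows "((\<lambda>\<theta>. if \<theta> < x then 1 else 0) has_integral x) {0..B}"
proof -
  have "((\<lambda>\<theta>::real. 1::real) has_integral x) {0..x}"
    using has_integral_const_real[of "1::real" 0 x] assms by simp
  then have "((\<lambda>\<theta>::real. if \<theta> < x then 1 else 0) has_integral x) {0..x}"
    by (rule has_integral_spike_finite[where S="{x}", rotated 2]) auto
  moreover have "((\<lambda>\<theta>::real. if \<theta> < x then 1 else 0) has_integral (0::real)) {x..B}"
    by (rule has_integral_eq[where f = "\<lambda>_. 0"]) auto
  ultimately show ?thesis
    using has_integral_combine[of 0 x B] assms by fastforce
qed

text \<open>Layer cake: \<open>\<Sum>\<^sub>j w\<^sub>j c\<^sub>j\<close> is the integral over \<open>\<theta> \<ge> 0\<close> of the weight of the \<open>j\<close> with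
  \<open>c\<^sub>j > \<theta>\<close>, which by the equal totals is pointwise smaller for \<open>a\<close> than for \<open>b\<close>.\<close>

lemma sum_mult_le_if_lower_sums_ge:
  fixes a b c :: "'j \<Rightarrow> real"
  assumes J: "finite J" and c_nonneg: "\<And>j. j \<in> J \<Longrightarrow> 0 \<le> c j"
    and same_total: "sum a J = sum b J"
    and cheap_ge: "\<And>\<theta>. (\<Sum>j\<in>{j\<in>J. c j \<le> \<theta>}. b j) \<le> (\<Sum>j\<in>{j\<in>J. c j \<le> \<theta>}. a j)"
  shows "(\<Sum>j\<in>J. a j * c j) \<le> (\<Sum>j\<in>J. b j * c j)"
proof -
  define B where "B = (\<Sum>j\<in>J. c j)"
  have c_le_B: "c j \<le> B" if "j \<in> J" for j
    unfolding B_def using member_le_sum[OF that] c_nonneg J by auto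
  have layer_cake: "((\<lambda>\<theta>. \<Sum>j\<in>J. if \<theta> < c j then w j else 0) has_integral (\<Sum>j\<in>J. w j * c j)) {0..B}"
    for w :: "'j \<Rightarrow> real"
  proof (rule has_integral_sum[OF J])
    fix j assume j: "j \<in> J"
    have "((\<lambda>\<theta>. w j * (if \<theta> < c j then 1 else 0)) has_integral w j * c j) {0..B}"
      using has_integral_mult_right[OF has_integral_step[of "c j" B]] c_nonneg c_le_B j by auto
    then show "((\<lambda>\<theta>. if \<theta> < c j then w j else 0) has_integral w j * c j) {0..B}"
      by (simp add: if_distrib cong: if_cong)
  qed
  have expensive: "(\<Sum>j\<in>J. if \<theta> < c j then w j else 0) = sum w J - (\<Sum>j\<in>{j\<in>J. c j \<le> \<theta>}. w j)"
    for w :: "'j \<Rightarrow> real" and \<theta>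
  proof -
    have "sum w J = (\<Sum>j\<in>J. (if \<theta> < c j then w j else 0) + (if c j \<le> \<theta> then w j else 0))"
      by (rule sum.cong) auto
    also have "\<dots> = (\<Sum>j\<in>J. if \<theta> < c j then w j else 0) + (\<Sum>j\<in>{j\<in>J. c j \<le> \<theta>}. w j)"
      by (simp only: sum.distrib sum.inter_filter[OF J])
    finally show ?thesis by simp
  qed
  show ?thesis
  proof (rule has_integral_le[OF layer_cake layer_cake])
    fix \<theta>
    show "(\<Sum>j\<in>J. if \<theta> < c j then a j else 0) \<le> (\<Sum>j\<in>J. if \<theta> < c j then b j else 0)"
      unfolding expensive using same_total cheap_ge[of \<theta>] by linarith
  qed
qed

definition fixed_cost :: "nat \<Rightarrow> nat \<Rightarrow> (nat \<Rightarrow> real) \<Rightarrow> (nat \<Rightarrow> nat \<Rightarrow> nat) \<Rightarrow> real" where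
  "fixed_cost n K f m = (\<Sum>k\<in>{0..K}. f k * (if (\<Sum>i<n. m k i) > 0 then 1 else 0))"

definition variable_cost :: "nat \<Rightarrow> nat \<Rightarrow> (nat \<Rightarrow> nat \<Rightarrow> real) \<Rightarrow> (nat \<Rightarrow> nat \<Rightarrow> nat) \<Rightarrow> real" where
  "variable_cost n K c m = (\<Sum>k\<in>{0..K}. \<Sum>i<n. c k i * real (m k i))"

lemma period_cost_split: "period_cost n K f c m = fixed_cost n K f m + variable_cost n K c m"
  by (simp add: period_cost_def fixed_cost_def variable_cost_def sum.distrib)

lemma feasible_plan_serves:
  "feasible_plan n K T I0 S M \<Longrightarrow> t \<in> {1..T} \<Longrightarrow> i < n \<Longrightarrow> (\<Sum>k\<in>{0..K}. M t k i) = S t i"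
  by (simp add: feasible_plan_def)

lemma feasible_plan_within_stock:
  assumes "feasible_plan n K T I0 S M" "i < n" "k \<in> {1..K}"
  shows "(\<Sum>t\<in>{1..T}. M t k i) \<le> I0 k i"
proof (cases "T = 0")
  case False
  then have "int (M T k i) \<le> int (I0 k i) - (\<Sum>t\<in>{1..<T}. int (M t k i))"
    using assms unfolding feasible_plan_def by auto
  then have "int (M T k i + (\<Sum>t\<in>{1..<T}. M t k i)) \<le> int (I0 k i)"
    by (simp add: of_nat_sum)
  then have "M T k i + (\<Sum>t\<in>{1..<T}. M t k i) \<le> I0 k i"
    by (simp only: of_nat_le_iff)
  moreover have "{1..T} = insert T {1..<T}" using False by auto
  ultimately show ?thesis by simp
qed simp

lemma sum_filter_snd_Times:
  "(\<Sum>j\<in>{j\<in>A \<times> B. P (snd j)}. g (fst j) (snd j)) = (\<Sum>t\<in>A. \<Sum>k\<in>{k\<in>B. P k}. g t k)"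
proof -
  have "{j\<in>A \<times> B. P (snd j)} = A \<times> {k\<in>B. P k}" by auto
  then show ?thesis by (simp add: sum.cartesian_product')
qed

lemma sum_cheap_ccvp_mhat_ge:
  assumes feasible: "feasible_plan n K T I0 S M" and i: "i < n"
  shows "(\<Sum>t\<in>{1..T}. \<Sum>k\<in>{k\<in>{0..K}. c k i \<le> \<theta>}. M t k i)
       \<le> (\<Sum>t\<in>{1..T}. \<Sum>k\<in>{k\<in>{0..K}. c k i \<le> \<theta>}. mhat K c (ccvp_inv n K f c I0 S (t - 1)) (S t) k i)"
  by (rule sum_cheap_mhat_ge[where gated = "\<lambda>t. period_cost n K f c
        (mhat K c (ccvp_inv n K f c I0 S (t - 1)) (S t)) > f 0 + (\<Sum>i<n. c 0 i * real (S t i))"])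
    (simp add: ccvp_decision_def, simp add: feasible_plan_serves[OF feasible _ i],
      simp only: ccvp_inv.simps(1) feasible_plan_within_stock[OF feasible i])

lemma variable_cost_mhat_le:
  assumes feasible: "feasible_plan n K T I0 S M"
    and c_nonneg: "\<forall>k\<in>{0..K}. \<forall>i<n. 0 \<le> c k i"
  shows "(\<Sum>t\<in>{1..T}. variable_cost n K c (mhat K c (ccvp_inv n K f c I0 S (t - 1)) (S t)))
       \<le> (\<Sum>t\<in>{1..T}. variable_cost n K c (M t))"
proof -
  define mh where "mh t = mhat K c (ccvp_inv n K f c I0 S (t - 1)) (S t)" for t
  define J where "J = {1..T} \<times> {0..K}"
  have per_item: "(\<Sum>j\<in>J. real (mh (fst j) (snd j) i) * c (snd j) i)
      \<le> (\<Sum>j\<in>J. real (M (fst j) (snd j) i) * c (snd j) i)" if i: "i < n" for i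
  proof (rule sum_mult_le_if_lower_sums_ge)
    show "finite J" by (simp add: J_def)
    show "0 \<le> c (snd j) i" if "j \<in> J" for j using that c_nonneg i by (auto simp: J_def)
    have "(\<Sum>j\<in>J. real (mh (fst j) (snd j) i)) = (\<Sum>t\<in>{1..T}. real (S t i))"
      by (simp add: J_def sum.cartesian_product' mh_def flip: of_nat_sum) (simp add: sum_mhat)
    also have "\<dots> = (\<Sum>j\<in>J. real (M (fst j) (snd j) i))"
      using feasible_plan_serves[OF feasible _ i]
      by (simp add: J_def sum.cartesian_product' flip: of_nat_sum)
    finally show "(\<Sum>j\<in>J. real (mh (fst j) (snd j) i)) = (\<Sum>j\<in>J. real (M (fst j) (snd j) i))" .
    fix \<theta>
    have "(\<Sum>t\<in>{1..T}. \<Sum>k\<in>{k\<in>{0..K}. c k i \<le> \<theta>}. M t k i)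
        \<le> (\<Sum>t\<in>{1..T}. \<Sum>k\<in>{k\<in>{0..K}. c k i \<le> \<theta>}. mh t k i)"
      unfolding mh_def by (rule sum_cheap_ccvp_mhat_ge[OF feasible i])
    then show "(\<Sum>j\<in>{j\<in>J. c (snd j) i \<le> \<theta>}. real (M (fst j) (snd j) i))
        \<le> (\<Sum>j\<in>{j\<in>J. c (snd j) i \<le> \<theta>}. real (mh (fst j) (snd j) i))"
      unfolding J_def
        sum_filter_snd_Times[where P = "\<lambda>k. c k i \<le> \<theta>" and g = "\<lambda>t k. real (M t k i)"]
        sum_filter_snd_Times[where P = "\<lambda>k. c k i \<le> \<theta>" and g = "\<lambda>t k. real (mh t k i)"]
      by (simp only: of_nat_le_iff flip: of_nat_sum)
  qed
  have swap: "(\<Sum>t\<in>{1..T}. variable_cost n K c (A t)) = (\<Sum>i<n. \<Sum>j\<in>J. real (A (fst j) (snd j) i) * c (snd j) i)"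
    for A :: "nat \<Rightarrow> nat \<Rightarrow> nat \<Rightarrow> nat"
    unfolding variable_cost_def J_def sum.cartesian_product'
    by (subst sum.swap) (simp add: sum_distrib_left mult.commute sum.swap[of _ "{..<n}"])
  show ?thesis
    unfolding mh_def[symmetric] swap by (rule sum_mono) (rule per_item, simp)
qed

definition rdc_alloc :: "(nat \<Rightarrow> nat) \<Rightarrow> nat \<Rightarrow> nat \<Rightarrow> nat" where
  "rdc_alloc s = (\<lambda>k i. if k = 0 then s i else 0)"

lemma period_cost_rdc_alloc:
  "period_cost n K f c (rdc_alloc s)
     = (if (\<Sum>i<n. s i) > 0 then f 0 else 0) + (\<Sum>i<n. c 0 i * real (s i))"
  by (simp add: period_cost_def rdc_alloc_def sum_atLeast0_atMost)

lemma fixed_cost_bounds: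
  assumes "\<forall>k\<in>{0..K}. 0 \<le> f k"
  shows "0 \<le> fixed_cost n K f m" "fixed_cost n K f m \<le> (\<Sum>k\<in>{0..K}. f k)"
  using assms unfolding fixed_cost_def by (auto intro!: sum_nonneg sum_mono)

lemma variable_cost_nonneg:
  "\<forall>k\<in>{0..K}. \<forall>i<n. 0 \<le> c k i \<Longrightarrow> 0 \<le> variable_cost n K c m"
  unfolding variable_cost_def by (auto intro!: sum_nonneg)

lemma allocation_costs_cong:
  assumes "\<And>k i. k \<in> {0..K} \<Longrightarrow> i < n \<Longrightarrow> m k i = m' k i"
  shows "fixed_cost n K f m = fixed_cost n K f m'" "variable_cost n K c m = variable_cost n K c m'"
proof -
  have row: "(\<Sum>i<n. m k i) = (\<Sum>i<n. m' k i)"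
    "(\<Sum>i<n. c k i * real (m k i)) = (\<Sum>i<n. c k i * real (m' k i))" if "k \<in> {0..K}" for k
    using assms[OF that] by (auto intro!: sum.cong)
  show "fixed_cost n K f m = fixed_cost n K f m'"
    unfolding fixed_cost_def by (rule sum.cong) (simp_all add: row)
  show "variable_cost n K c m = variable_cost n K c m'"
    unfolding variable_cost_def by (rule sum.cong) (simp_all add: row)
qed

lemma period_cost_ccvp_decision_le:
  assumes f_nonneg: "\<forall>k\<in>{0..K}. 0 \<le> f k" and c_nonneg: "\<forall>k\<in>{0..K}. \<forall>i<n. 0 \<le> c k i"
  shows "period_cost n K f c (ccvp_decision n K f c st s)
       \<le> variable_cost n K c (mhat K c st s) + min (\<Sum>k\<in>{0..K}. f k) (period_cost n K f c (rdc_alloc s))"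
proof -
  define mh where "mh = mhat K c st s"
  have fixed_mh: "0 \<le> fixed_cost n K f mh" "fixed_cost n K f mh \<le> (\<Sum>k\<in>{0..K}. f k)"
    using fixed_cost_bounds[OF f_nonneg] by blast+
  have var_mh: "0 \<le> variable_cost n K c mh"
    using variable_cost_nonneg[OF c_nonneg] .
  have pc_mh: "period_cost n K f c mh = fixed_cost n K f mh + variable_cost n K c mh"
    by (rule period_cost_split)
  show ?thesis
    unfolding min_add_distrib_right mh_def[symmetric]
  proof (cases "period_cost n K f c mh > f 0 + (\<Sum>i<n. c 0 i * real (s i))")
    case True
    then have decision: "ccvp_decision n K f c st s = rdc_alloc s"
      by (simp add: ccvp_decision_def rdc_alloc_def mh_def)
    have "period_cost n K f c (rdc_alloc s) \<le> f 0 + (\<Sum>i<n. c 0 i * real (s i))"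
      using f_nonneg by (simp add: period_cost_rdc_alloc)
    then show "period_cost n K f c (ccvp_decision n K f c st s) \<le> min
        (variable_cost n K c mh + (\<Sum>k\<in>{0..K}. f k))
        (variable_cost n K c mh + period_cost n K f c (rdc_alloc s))"
      unfolding decision using True fixed_mh var_mh pc_mh by (intro min.boundedI) linarith+
  next
    case False
    then have decision: "ccvp_decision n K f c st s = mh"
      by (simp add: ccvp_decision_def mh_def)
    have "fixed_cost n K f mh \<le> period_cost n K f c (rdc_alloc s)"
    proof (cases "(\<Sum>i<n. s i) > 0")
      case True
      then show ?thesis using False var_mh pc_mh by (simp add: period_cost_rdc_alloc)
    next
      case False
      then have "mh k i = 0" if "i < n" for k i
        using that mhat_le_order[of K c st s k i] by (simp add: mh_def)
      then have "fixed_cost n K f mh = 0" by (simp add: fixed_cost_def)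
      then show ?thesis
        using fixed_cost_bounds(1)[OF f_nonneg] variable_cost_nonneg[OF c_nonneg]
        by (simp add: period_cost_split)
    qed
    then show "period_cost n K f c (ccvp_decision n K f c st s) \<le> min
        (variable_cost n K c mh + (\<Sum>k\<in>{0..K}. f k))
        (variable_cost n K c mh + period_cost n K f c (rdc_alloc s))"
      unfolding decision using fixed_mh pc_mh by (intro min.boundedI) linarith+
  qed
qed

lemma min_fixed_rdc_le_scaled_cost:
  fixes R :: real
  assumes f_nonneg: "\<forall>k\<in>{0..K}. 0 \<le> f k" and c_nonneg: "\<forall>k\<in>{0..K}. \<forall>i<n. 0 \<le> c k i"
    and R_ge_2: "2 \<le> R" and R_fdc: "\<forall>k\<in>{1..K}. (\<Sum>k'\<in>{0..K}. f k') \<le> R * f k"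
    and serves: "\<forall>i<n. (\<Sum>k\<in>{0..K}. m k i) = s i"
  shows "min (\<Sum>k\<in>{0..K}. f k) (period_cost n K f c (rdc_alloc s))
       \<le> R * fixed_cost n K f m + (R - 1) * variable_cost n K c m"
proof (cases "\<exists>k\<in>{1..K}. (\<Sum>i<n. m k i) > 0")
  case True
  then obtain k where k: "k \<in> {1..K}" "(\<Sum>i<n. m k i) > 0" by blast
  have "f k \<le> fixed_cost n K f m"
    unfolding fixed_cost_def
    using member_le_sum[of k "{0..K}" "\<lambda>k. f k * (if (\<Sum>i<n. m k i) > 0 then 1 else 0)"] k f_nonneg
    by auto
  then have "R * f k \<le> R * fixed_cost n K f m"
    using R_ge_2 by (simp add: mult_left_mono)
  then have "(\<Sum>k\<in>{0..K}. f k) \<le> R * fixed_cost n K f m"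
    using R_fdc k(1) by fastforce
  moreover have "0 \<le> (R - 1) * variable_cost n K c m"
    using R_ge_2 variable_cost_nonneg[OF c_nonneg] by simp
  ultimately show ?thesis by (intro min.coboundedI1) linarith
next
  case False
  have agree: "rdc_alloc s k i = m k i" if "k \<in> {0..K}" "i < n" for k i
  proof (cases "k = 0")
    case True
    have "(\<Sum>k\<in>{1..K}. m k i) = 0" using False \<open>i < n\<close> by auto
    moreover have "m 0 i + (\<Sum>k\<in>{1..K}. m k i) = s i"
      using serves \<open>i < n\<close> by (simp only: sum_atLeast0_atMost)
    ultimately show ?thesis using True by (simp add: rdc_alloc_def)
  qed (use False that in \<open>auto simp: rdc_alloc_def\<close>)
  have "period_cost n K f c (rdc_alloc s) = fixed_cost n K f m + variable_cost n K c m"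
    by (simp only: period_cost_split allocation_costs_cong[OF agree])
  also have "\<dots> \<le> R * fixed_cost n K f m + (R - 1) * variable_cost n K c m"
  proof -
    have "fixed_cost n K f m \<le> R * fixed_cost n K f m"
      using mult_right_mono[OF _ fixed_cost_bounds(1)[OF f_nonneg], of 1 R] R_ge_2 by simp
    moreover have "variable_cost n K c m \<le> (R - 1) * variable_cost n K c m"
      using mult_right_mono[OF _ variable_cost_nonneg[OF c_nonneg], of 1 "R - 1"] R_ge_2 by simp
    ultimately show ?thesis by linarith
  qed
  finally show ?thesis by (intro min.coboundedI2)
qed

lemma ALG_ccvp_le_plan_cost:
  fixes R :: real
  assumes f_nonneg: "\<forall>k\<in>{0..K}. 0 \<le> f k" and c_nonneg: "\<forall>k\<in>{0..K}. \<forall>i<n. 0 \<le> c k i"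
    and R_ge_2: "2 \<le> R" and R_fdc: "\<forall>k\<in>{1..K}. (\<Sum>k'\<in>{0..K}. f k') \<le> R * f k"
    and feasible: "feasible_plan n K T I0 S M"
  shows "ALG_ccvp n K T f c I0 S \<le> R * (\<Sum>t\<in>{1..T}. period_cost n K f c (M t))"
proof -
  define mh where "mh t = mhat K c (ccvp_inv n K f c I0 S (t - 1)) (S t)" for t
  define F where "F = (\<Sum>k\<in>{0..K}. f k)"
  have "ALG_ccvp n K T f c I0 S
      \<le> (\<Sum>t\<in>{1..T}. variable_cost n K c (mh t) + min F (period_cost n K f c (rdc_alloc (S t))))"
    unfolding ALG_ccvp_def ccvp_alloc_def mh_def F_def
    by (rule sum_mono) (rule period_cost_ccvp_decision_le[OF f_nonneg c_nonneg])
  also have "\<dots> = (\<Sum>t\<in>{1..T}. variable_cost n K c (mh t))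
      + (\<Sum>t\<in>{1..T}. min F (period_cost n K f c (rdc_alloc (S t))))"
    by (rule sum.distrib)
  also have "\<dots> \<le> (\<Sum>t\<in>{1..T}. variable_cost n K c (M t))
      + (\<Sum>t\<in>{1..T}. R * fixed_cost n K f (M t) + (R - 1) * variable_cost n K c (M t))"
  proof (rule add_mono)
    show "(\<Sum>t\<in>{1..T}. variable_cost n K c (mh t)) \<le> (\<Sum>t\<in>{1..T}. variable_cost n K c (M t))"
      unfolding mh_def by (rule variable_cost_mhat_le[OF feasible c_nonneg])
    show "(\<Sum>t\<in>{1..T}. min F (period_cost n K f c (rdc_alloc (S t))))
        \<le> (\<Sum>t\<in>{1..T}. R * fixed_cost n K f (M t) + (R - 1) * variable_cost n K c (M t))"
      unfolding F_def
    proof (rule sum_mono)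
      fix t assume "t \<in> {1..T}"
      then have "\<forall>i<n. (\<Sum>k\<in>{0..K}. M t k i) = S t i"
        using feasible_plan_serves[OF feasible] by blast
      then show "min (\<Sum>k\<in>{0..K}. f k) (period_cost n K f c (rdc_alloc (S t)))
          \<le> R * fixed_cost n K f (M t) + (R - 1) * variable_cost n K c (M t)"
        by (rule min_fixed_rdc_le_scaled_cost[OF f_nonneg c_nonneg R_ge_2 R_fdc])
    qed
  qed
  also have "\<dots> = R * (\<Sum>t\<in>{1..T}. period_cost n K f c (M t))"
    by (simp add: period_cost_split sum.distrib sum_distrib_left algebra_simps sum_subtractf)
  finally show ?thesis .
qed

lemma le_mult_OPT:
  fixes R x :: real
  assumes "0 < R"
    and "\<And>M. feasible_plan n K T I0 S M \<Longrightarrow> x \<le> R * (\<Sum>t\<in>{1..T}. period_cost n K f c (M t))"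
  shows "x \<le> R * OPT n K T f c I0 S"
proof -
  have "feasible_plan n K T I0 S (\<lambda>t. rdc_alloc (S t))"
    by (simp add: feasible_plan_def rdc_alloc_def sum_atLeast0_atMost)
  then have "x / R \<le> OPT n K T f c I0 S"
    unfolding OPT_def using assms
    by (intro cInf_greatest) (auto simp: pos_divide_le_eq mult.commute)
  then show ?thesis
    using assms(1) by (simp add: pos_divide_le_eq mult.commute)
qed

lemma sum_fixed_costs_le_ratio_mult:
  fixes f :: "nat \<Rightarrow> real"
  assumes K: "K \<ge> 1" and fpos: "\<forall>k\<in>{1..K}. f k > 0" and k: "k \<in> {1..K}"
  shows "(\<Sum>k'\<in>{0..K}. f k') \<le> max ((f 0 + (\<Sum>k\<in>{1..K}. f k)) / Min (f ` {1..K})) 2 * f k"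
proof -
  let ?R = "max ((f 0 + (\<Sum>k\<in>{1..K}. f k)) / Min (f ` {1..K})) 2"
  have Min_pos: "0 < Min (f ` {1..K})"
    using K fpos by (simp add: Min_gr_iff)
  have "(\<Sum>k'\<in>{0..K}. f k') = (f 0 + (\<Sum>k\<in>{1..K}. f k)) / Min (f ` {1..K}) * Min (f ` {1..K})"
    using Min_pos by (simp add: sum_atLeast0_atMost)
  also have "\<dots> \<le> ?R * Min (f ` {1..K})"
    using Min_pos by (intro mult_right_mono) auto
  also have "\<dots> \<le> ?R * f k"
    using k by (intro mult_left_mono) auto
  finally show ?thesis .
qed

theorem theorem3:
  fixes K :: nat and f :: "nat \<Rightarrow> real"
  assumes K: "K \<ge> 1"
    and f0: "f 0 \<ge> 0"
    and fpos: "\<forall>k\<in>{1..K}. f k > 0"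
  shows "\<forall>(n::nat) (T::nat) (c::nat \<Rightarrow> nat \<Rightarrow> real) (I0::nat \<Rightarrow> nat \<Rightarrow> nat) (S::nat \<Rightarrow> nat \<Rightarrow> nat).
           (\<forall>k\<in>{0..K}. \<forall>i<n. c k i \<ge> 0) \<longrightarrow>
           ALG_ccvp n K T f c I0 S
             \<le> max ((f 0 + (\<Sum>k\<in>{1..K}. f k)) / Min (f ` {1..K})) 2 * OPT n K T f c I0 S"
proof (intro allI impI)
  fix n T :: nat and c :: "nat \<Rightarrow> nat \<Rightarrow> real" and I0 S :: "nat \<Rightarrow> nat \<Rightarrow> nat"
  assume c_nonneg: "\<forall>k\<in>{0..K}. \<forall>i<n. c k i \<ge> 0"
  let ?R = "max ((f 0 + (\<Sum>k\<in>{1..K}. f k)) / Min (f ` {1..K})) 2"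
  have f_nonneg: "\<forall>k\<in>{0..K}. 0 \<le> f k"
    using f0 fpos by (metis atLeastAtMost_iff less_eq_real_def less_one linorder_not_le)
  have R_fdc: "\<forall>k\<in>{1..K}. (\<Sum>k'\<in>{0..K}. f k') \<le> ?R * f k"
    using sum_fixed_costs_le_ratio_mult[OF K fpos] by blast
  show "ALG_ccvp n K T f c I0 S \<le> ?R * OPT n K T f c I0 S"
    by (rule le_mult_OPT, simp)
      (rule ALG_ccvp_le_plan_cost[OF f_nonneg c_nonneg _ R_fdc], simp_all)
qed

end
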